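(* Let $\mathcal S_1=(C,\phi_1,F)$ and $\mathcal S_2=(C,\phi_2,F)$ be two systems with common component set $C=[n]$, semicoherent structure functions $\phi_1,\phi_2$, and common lifetime distribution $F$ having no ties. Suppose that \[ \Pr\big(\mathbf X(t_1)=\mathbf x\text{ and }\mathbf X(t_2)=\mathbf y\big)=\Pr\big(\mathbf X(t_1)=\sigma(\mathbf x)\text{ and }\mathbf X(t_2)=\sigma(\mathbf y)\big) \] for all $\mathbf x,\mathbf y\in\{0,1\}^n$, all $t_1,t_2\ge0$ and all $\sigma\in\mathfrak S_n$. Then for all $t_1,t_2\ge0$, \[ \overline F_{\mathcal S_1,\mathcal S_2}(t_1,t_2)=\sum_{k=1}^n\sum_{l=1}^n s_{k,l}\,\overline F_{k:n,l:n}(t_1,t_2). \]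
   Context: Let $n\ge1$, $C=[n]$, and let $T_1,\ldots,T_n$ be nonnegative random component lifetimes with joint c.d.f. $F$ having no ties. $\mathfrak S_n$ is the symmetric group on $[n]$, and for $\mathbf x\in\{0,1\}^n$, $\sigma(\mathbf x)=(x_{\sigma^{-1}(1)},\ldots,x_{\sigma^{-1}(n)})$. A structure function $\phi\colon\{0,1\}^n\to\{0,1\}$ is semicoherent if nondecreasing in each variable with $\phi(0,\ldots,0)=0$, $\phi(1,\ldots,1)=1$; Boolean vectors are identified with subsets via $x_i=1\iff i\in A$. For $t\ge0$, $X_j(t)=\mathrm{Ind}(T_j>t)$, $\mathbf X(t)=(X_1(t),\ldots,X_n(t))$; the lifetime $T_{\mathcal S}$ of $\mathcal S=(C,\phi,F)$ is the random time with $\phi(\mathbf X(t))=1$ iff $t<T_{\mathcal S}$. $T_{k:n}$ is the $k$-th smallest lifetime. $\overline F_{\mathcal S_1,\mathcal S_2}(t_1,t_2)=\Pr(T_{\mathcal S_1}>t_1\text{ and }T_{\mathcal S_2}>t_2)$ and $\overline F_{k:n,l:n}(t_1,t_2)=\Pr(T_{k:n}>t_1\text{ and }T_{l:n}>t_2)$. The combinatorial joint structure signature $s_{k,l}$ ($k,l\in[n]$) is defined (independently of $F$) by $s_{k,l}=\overline S_{k-1,l-1}-\overline S_{k,l-1}-\overline S_{k-1,l}+\overline S_{k,l}$, where for $k,l\in\{0,\ldots,n\}$, \[ \overline S_{k,l}=\sum_{A\subseteq C,\ |A|=n-k}\ \sum_{B\subseteq C,\ |B|=n-l}q_0(A,B)\,\phi_1(A)\,\phi_2(B),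 \] and \[ q_0(A,B)=\begin{cases}\frac{(n-|A|)!\,(|A|-|B|)!\,|B|!}{n!} & \text{if } B\subseteq A,\\[2pt] \frac{(n-|B|)!\,(|B|-|A|)!\,|A|!}{n!} & \text{if } A\subseteq B,\\[2pt] 0 & \text{otherwise.}\end{cases} \] *)

theory Defs
  imports "HOL-Probability.Probability" "HOL-Combinatorics.Permutations"
begin

text \<open>Components are C = {1..n}; Boolean vectors are identified with subsets of C.
  A structure function is a predicate on subsets (true = value 1).\<close>

definition semicoherent :: "nat \<Rightarrow> (nat set \<Rightarrow> bool) \<Rightarrow> bool" where
  "semicoherent n \<phi> \<longleftrightarrow>
     (\<forall>A B. A \<subseteq> B \<and> B \<subseteq> {1..n} \<and> \<phi> A \<longrightarrow> \<phi> B) \<and> \<not> \<phi> {} \<and> \<phi> {1..n}"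

definition alive :: "nat \<Rightarrow> (nat \<Rightarrow> 'a \<Rightarrow> real) \<Rightarrow> real \<Rightarrow> 'a \<Rightarrow> nat set" where
  "alive n T t \<omega> = {j \<in> {1..n}. T j \<omega> > t}"

text \<open>System lifetime: the time s with phi(X(t)) = 1 iff t < s.\<close>
definition sys_lifetime :: "nat \<Rightarrow> (nat set \<Rightarrow> bool) \<Rightarrow> (nat \<Rightarrow> 'a \<Rightarrow> real) \<Rightarrow> 'a \<Rightarrow> real" where
  "sys_lifetime n \<phi> T \<omega> = Sup {t. \<phi> (alive n T t \<omega>)}"

definition order_stat :: "nat \<Rightarrow> nat \<Rightarrow> (nat \<Rightarrow> 'a \<Rightarrow> real) \<Rightarrow> 'a \<Rightarrow> real" where
  "order_stat n k T \<omega> = sort (map (\<lambda>j. T j \<omega>) [1..<n+1]) ! (k - 1)"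

definition q0 :: "nat \<Rightarrow> nat set \<Rightarrow> nat set \<Rightarrow> real" where
  "q0 n A B =
     (if B \<subseteq> A then fact (n - card A) * fact (card A - card B) * fact (card B) / fact n
      else if A \<subseteq> B then fact (n - card B) * fact (card B - card A) * fact (card A) / fact n
      else 0)"

definition Sbar :: "nat \<Rightarrow> (nat set \<Rightarrow> bool) \<Rightarrow> (nat set \<Rightarrow> bool) \<Rightarrow> nat \<Rightarrow> nat \<Rightarrow> real" where
  "Sbar n \<phi>1 \<phi>2 k l =
     (\<Sum>A\<in>{A. A \<subseteq> {1..n} \<and> card A = n - k}. \<Sum>B\<in>{B. B \<subseteq> {1..n} \<and> card B = n - l}.
        q0 n A B * of_bool (\<phi>1 A) * of_bool (\<phi>2 B))"

definition joint_sig :: "nat \<Rightarrow> (nat set \<Rightarrow> bool) \<Rightarrow> (nat set \<Rightarrow> bool) \<Rightarrow> nat \<Rightarrow> nat \<Rightarrow> real" where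
  "joint_sig n \<phi>1 \<phi>2 k l =
     Sbar n \<phi>1 \<phi>2 (k - 1) (l - 1) - Sbar n \<phi>1 \<phi>2 k (l - 1)
     - Sbar n \<phi>1 \<phi>2 (k - 1) l + Sbar n \<phi>1 \<phi>2 k l"

end

theory Submission
  imports Defs
begin

text \<open>Components never revive, so the state sets \<open>X(t1)\<close> and \<open>X(t2)\<close> are nested.
  Exchangeability makes their joint law constant on the orbits of nested pairs \<open>(A, B)\<close> under
  permutations, and \<open>q0 n A B\<close> is the reciprocal of the orbit size; hence
  \<open>P(X(t1) = A, X(t2) = B) = q0 n A B * \<pi> |A| |B|\<close>, where \<open>\<pi> a b\<close> is the probability that
  \<open>a\<close> components are alive at \<open>t1\<close> and \<open>b\<close> at \<open>t2\<close>. The event that both systems survive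
  is \<open>\<phi>1 (X(t1)) \<and> \<phi>2 (X(t2))\<close>, of probability \<open>\<Sum>a b. \<pi> a b * Sbar (n - a) (n - b)\<close>,
  while \<open>T\<^sub>k\<^sub>:\<^sub>n > t1 \<and> T\<^sub>l\<^sub>:\<^sub>n > t2\<close> means that more than \<open>n - k\<close> components are
  alive at \<open>t1\<close> and more than \<open>n - l\<close> at \<open>t2\<close>. Summing the mixed second differences
  \<open>joint_sig\<close> of \<open>Sbar\<close> over these ranges telescopes back to \<open>Sbar (n - a) (n - b)\<close>, since
  \<open>Sbar\<close> vanishes when either index is \<open>n\<close>: a semicoherent system is down once all of its
  components are.\<close>

section \<open>Permutation-invariant functions of nested pairs of sets\<close>

abbreviation subsets_of_card :: "'a set \<Rightarrow> nat \<Rightarrow> 'a set set" where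
  "subsets_of_card S a \<equiv> {A. A \<subseteq> S \<and> card A = a}"

lemma exists_permutes_nested_pair:
  assumes "finite S" "B \<subseteq> A" "A \<subseteq> S" "B' \<subseteq> A'" "A' \<subseteq> S"
    and "card A = card A'" "card B = card B'"
  obtains \<sigma> where "\<sigma> permutes S" "\<sigma> ` A = A'" "\<sigma> ` B = B'"
proof -
  have fin: "finite A" "finite A'" "finite B" "finite B'"
    using assms finite_subset by metis+
  obtain f where f: "bij_betw f B B'"
    using finite_same_card_bij fin assms(7) by metis
  obtain g where g: "bij_betw g (A - B) (A' - B')"
    using finite_same_card_bij[of "A - B" "A' - B'"] fin assms by (auto simp: card_Diff_subset)
  obtain h where h: "bij_betw h (S - A) (S - A')"
    using finite_same_card_bij[of "S - A" "S - A'"] fin assms by (auto simp: card_Diff_subset)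
  define \<sigma> where "\<sigma> x = (if x \<in> B then f x else if x \<in> A then g x else if x \<in> S then h x else x)" for x
  have "bij_betw \<sigma> B B'"
    using f by (rule bij_betw_cong[THEN iffD1, rotated]) (simp add: \<sigma>_def)
  moreover have "bij_betw \<sigma> (A - B) (A' - B')"
    using g by (rule bij_betw_cong[THEN iffD1, rotated]) (simp add: \<sigma>_def)
  ultimately have \<sigma>A: "bij_betw \<sigma> A A'"
    using bij_betw_combine[of \<sigma> B B' "A - B" "A' - B'"] assms(2,4) by (simp add: Un_Diff_cancel2 sup.absorb2)
  moreover have "bij_betw \<sigma> (S - A) (S - A')"
    using h by (rule bij_betw_cong[THEN iffD1, rotated]) (use assms(2) in \<open>auto simp: \<sigma>_def\<close>)
  ultimately have "bij_betw \<sigma> S S"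
    using bij_betw_combine[of \<sigma> A A' "S - A" "S - A'"] assms(3,5) by (simp add: sup.absorb2)
  moreover have "\<sigma> x = x" if "x \<notin> S" for x
    using that assms(2,3) by (auto simp: \<sigma>_def)
  ultimately have "\<sigma> permutes S"
    by (rule bij_imp_permutes)
  with that show ?thesis
    using \<sigma>A \<open>bij_betw \<sigma> B B'\<close> by (meson bij_betw_imp_surj_on)
qed

lemma q0_commute: "q0 n A B = q0 n B A"
  unfolding q0_def by auto

text \<open>\<open>q0 (card S) A B\<close> is the reciprocal of the number of nested pairs \<open>B' \<subseteq> A' \<subseteq> S\<close>
  with \<open>|A'| = |A|\<close> and \<open>|B'| = |B|\<close>, i.e.\ of the size of the orbit of \<open>(A, B)\<close>.\<close>

lemma permutation_invariant_eq_q0: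
  fixes S :: "nat set" and p :: "nat set \<Rightarrow> nat set \<Rightarrow> real"
  assumes "finite S"
    and nested: "\<And>A B. A \<subseteq> S \<Longrightarrow> B \<subseteq> S \<Longrightarrow> \<not> B \<subseteq> A \<Longrightarrow> p A B = 0"
    and inv: "\<And>A B \<sigma>. A \<subseteq> S \<Longrightarrow> B \<subseteq> S \<Longrightarrow> \<sigma> permutes S \<Longrightarrow> p (\<sigma> ` A) (\<sigma> ` B) = p A B"
    and "A \<subseteq> S" "B \<subseteq> S"
  shows "p A B = q0 (card S) A B *
           (\<Sum>A'\<in>subsets_of_card S (card A). \<Sum>B'\<in>subsets_of_card S (card B). p A' B')"
proof (cases "B \<subseteq> A")
  case False
  have "p A' B' = 0" if "A' \<in> subsets_of_card S (card A)" "B' \<in> subsets_of_card S (card B)"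
    and "A \<subseteq> B" for A' B'
  proof -
    have "card A < card B"
      using \<open>A \<subseteq> B\<close> False \<open>B \<subseteq> S\<close> \<open>finite S\<close> by (metis finite_subset psubsetI psubset_card_mono)
    then have "\<not> B' \<subseteq> A'"
      using that \<open>finite S\<close> by (metis (mono_tags) card_mono finite_subset leD mem_Collect_eq)
    then show ?thesis
      using nested that by blast
  qed
  then show ?thesis
    using False nested assms(4,5) by (auto simp: q0_def intro!: sum.neutral)
next
  case True
  define a b where "a = card A" and "b = card B"
  have "b \<le> a" "a \<le> card S"
    using True assms(1,4) by (auto simp: a_def b_def card_mono finite_subset)
  have orbit: "p A' B' = (if B' \<subseteq> A' then p A B else 0)"
    if A': "A' \<in> subsets_of_card S a" and B': "B' \<in> subsets_of_card S b" for A' B'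
  proof (cases "B' \<subseteq> A'")
    case True
    obtain \<sigma> where "\<sigma> permutes S" "\<sigma> ` A = A'" "\<sigma> ` B = B'"
      by (rule exists_permutes_nested_pair[OF assms(1) \<open>B \<subseteq> A\<close> assms(4) True])
        (use A' B' in \<open>auto simp: a_def b_def\<close>)
    then show ?thesis
      using inv assms(4,5) True by force
  qed (use nested A' B' in auto)
  have "(\<Sum>A'\<in>subsets_of_card S a. \<Sum>B'\<in>subsets_of_card S b. p A' B')
      = (\<Sum>A'\<in>subsets_of_card S a. card {B'. B' \<subseteq> A' \<and> card B' = b} * p A B)"
  proof (intro sum.cong refl)
    fix A' assume "A' \<in> subsets_of_card S a"
    then have "{B' \<in> subsets_of_card S b. B' \<subseteq> A'} = {B'. B' \<subseteq> A' \<and> card B' = b}"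
      by auto
    then show "(\<Sum>B'\<in>subsets_of_card S b. p A' B') = card {B'. B' \<subseteq> A' \<and> card B' = b} * p A B"
      using orbit[OF \<open>A' \<in> _\<close>] \<open>finite S\<close> by (simp add: sum.inter_filter[symmetric])
  qed
  also have "\<dots> = (\<Sum>A'\<in>subsets_of_card S a. (a choose b) * p A B)"
    using \<open>finite S\<close> by (intro sum.cong refl) (auto simp: n_subsets finite_subset)
  also have "\<dots> = real (card S choose a) * real (a choose b) * p A B"
    using \<open>finite S\<close> by (simp add: n_subsets)
  finally have "q0 (card S) A B * (\<Sum>A'\<in>subsets_of_card S a. \<Sum>B'\<in>subsets_of_card S b. p A' B')
      = fact (card S - a) * fact (a - b) * fact b / fact (card S)
        * (real (card S choose a) * real (a choose b)) * p A B"
    using True by (simp add: q0_def a_def b_def)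
  also have "\<dots> = p A B"
    using \<open>b \<le> a\<close> \<open>a \<le> card S\<close> by (simp add: binomial_fact field_simps)
  finally show ?thesis
    by (simp add: a_def b_def)
qed

lemma permutation_invariant_eq_q0':
  fixes S :: "nat set" and p :: "nat set \<Rightarrow> nat set \<Rightarrow> real"
  assumes "finite S"
    and nested: "\<And>A B. A \<subseteq> S \<Longrightarrow> B \<subseteq> S \<Longrightarrow> \<not> A \<subseteq> B \<Longrightarrow> p A B = 0"
    and inv: "\<And>A B \<sigma>. A \<subseteq> S \<Longrightarrow> B \<subseteq> S \<Longrightarrow> \<sigma> permutes S \<Longrightarrow> p (\<sigma> ` A) (\<sigma> ` B) = p A B"
    and "A \<subseteq> S" "B \<subseteq> S"
  shows "p A B = q0 (card S) A B *
           (\<Sum>A'\<in>subsets_of_card S (card A). \<Sum>B'\<in>subsets_of_card S (card B). p A' B')"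
proof -
  have "p A B = q0 (card S) B A *
          (\<Sum>B'\<in>subsets_of_card S (card B). \<Sum>A'\<in>subsets_of_card S (card A). p A' B')"
    by (rule permutation_invariant_eq_q0[where p = "\<lambda>B A. p A B"]) (use assms in auto)
  then show ?thesis
    by (simp add: q0_commute sum.swap[where A = "subsets_of_card S (card B)"])
qed

section \<open>Telescoping the joint signature\<close>

lemma sum_tail_telescope:
  fixes f :: "nat \<Rightarrow> 'a::comm_ring_1"
  assumes "a \<le> n"
  shows "(\<Sum>k=1..n. of_bool (n - k < a) * (f (k - 1) - f k)) = f (n - a) - f n"
proof -
  have "{1..n} \<inter> {k. n - k < a} = {Suc (n - a)..n}"
    using assms by auto
  then have "(\<Sum>k=1..n. of_bool (n - k < a) * (f (k - 1) - f k)) = (\<Sum>k=Suc (n - a)..n. f (k - 1) - f k)"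
    by (simp add: sum.inter_filter[symmetric])
  also have "\<dots> = - (\<Sum>k=Suc (n - a)..n. f k - f (k - 1))"
    by (simp add: sum_negf[symmetric])
  also have "\<dots> = f (n - a) - f n"
    by (subst sum_telescope'') simp_all
  finally show ?thesis .
qed

lemma sum_mixed_difference_telescope:
  fixes S :: "nat \<Rightarrow> nat \<Rightarrow> 'a::comm_ring_1"
  assumes "a \<le> n" "b \<le> n" "\<And>l. S n l = 0" "\<And>k. S k n = 0"
  shows "(\<Sum>k=1..n. \<Sum>l=1..n. (S (k - 1) (l - 1) - S k (l - 1) - S (k - 1) l + S k l)
            * (of_bool (n - k < a) * of_bool (n - l < b))) = S (n - a) (n - b)"
proof -
  have inner: "(\<Sum>l=1..n. (S (k - 1) (l - 1) - S k (l - 1) - S (k - 1) l + S k l)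
            * (of_bool (n - k < a) * of_bool (n - l < b)))
      = of_bool (n - k < a) * ((S (k - 1) (n - b) - S k (n - b)) - (S (k - 1) n - S k n))" for k
    using sum_tail_telescope[OF assms(2), of "\<lambda>l. S (k - 1) l - S k l"]
    by (simp add: sum_distrib_left algebra_simps)
  show ?thesis
    unfolding inner using sum_tail_telescope[OF assms(1), of "\<lambda>k. S k (n - b) - S k n"] assms(3,4)
    by (simp add: algebra_simps)
qed

lemma sum_Pow_pairs_by_card:
  fixes g :: "'a set \<Rightarrow> 'a set \<Rightarrow> 'b::comm_monoid_add"
  assumes "finite S"
  shows "(\<Sum>A\<in>Pow S. \<Sum>B\<in>Pow S. g A B) = (\<Sum>a=0..card S. \<Sum>b=0..card S.
           \<Sum>A\<in>subsets_of_card S a. \<Sum>B\<in>subsets_of_card S b. g A B)"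
proof -
  have by_card: "(\<Sum>A\<in>Pow S. h A) = (\<Sum>a=0..card S. \<Sum>A\<in>subsets_of_card S a. h A)"
    for h :: "'a set \<Rightarrow> 'b"
  proof -
    have "card ` Pow S \<subseteq> {0..card S}"
      using assms by (auto intro: card_mono)
    then show ?thesis
      using sum.group[of "Pow S" "{0..card S}" card h] assms by simp
  qed
  show ?thesis
    by (simp add: by_card sum.swap[where A = "subsets_of_card S _" and B = "{0..card S}"])
qed

lemma Sbar_eq_sum_joint_sig:
  assumes "\<not> \<phi>1 {}" "\<not> \<phi>2 {}" "a \<le> n" "b \<le> n"
  shows "Sbar n \<phi>1 \<phi>2 (n - a) (n - b)
       = (\<Sum>k=1..n. \<Sum>l=1..n. joint_sig n \<phi>1 \<phi>2 k l * (of_bool (n - k < a) * of_bool (n - l < b)))"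
proof -
  have "card A = 0 \<longleftrightarrow> A = {}" if "A \<subseteq> {1..n}" for A :: "nat set"
    using that by (meson card_0_eq finite_atLeastAtMost finite_subset)
  then have "subsets_of_card {1..n} 0 = {{}}"
    by auto
  then have "Sbar n \<phi>1 \<phi>2 n l = 0" "Sbar n \<phi>1 \<phi>2 k n = 0" for k l
    using assms(1,2) by (simp_all add: Sbar_def)
  then show ?thesis
    unfolding joint_sig_def by (rule sum_mixed_difference_telescope[symmetric, OF assms(3,4)])
qed

lemma sum_subsets_of_card_structures_eq_Sbar:
  fixes p :: "nat set \<Rightarrow> nat set \<Rightarrow> real"
  assumes p: "\<And>A B. A \<subseteq> {1..n} \<Longrightarrow> B \<subseteq> {1..n} \<Longrightarrow> p A B = q0 n A B *
              (\<Sum>A'\<in>subsets_of_card {1..n} (card A). \<Sum>B'\<in>subsets_of_card {1..n} (card B). p A' B')"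
    and "a \<le> n" "b \<le> n"
  shows "(\<Sum>A\<in>subsets_of_card {1..n} a. \<Sum>B\<in>subsets_of_card {1..n} b. of_bool (\<phi>1 A \<and> \<phi>2 B) * p A B)
       = (\<Sum>A\<in>subsets_of_card {1..n} a. \<Sum>B\<in>subsets_of_card {1..n} b. p A B) * Sbar n \<phi>1 \<phi>2 (n - a) (n - b)"
    (is "_ = ?\<pi> * _")
proof -
  have "(\<Sum>A\<in>subsets_of_card {1..n} a. \<Sum>B\<in>subsets_of_card {1..n} b. of_bool (\<phi>1 A \<and> \<phi>2 B) * p A B)
      = (\<Sum>A\<in>subsets_of_card {1..n} a. \<Sum>B\<in>subsets_of_card {1..n} b.
           ?\<pi> * (q0 n A B * of_bool (\<phi>1 A) * of_bool (\<phi>2 B)))"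
    by (intro sum.cong refl) (auto simp: p)
  also have "\<dots> = ?\<pi> * Sbar n \<phi>1 \<phi>2 (n - a) (n - b)"
    unfolding Sbar_def using assms(2,3) by (simp only: diff_diff_cancel sum_distrib_left)
  finally show ?thesis .
qed

lemma joint_signature_expansion:
  fixes p :: "nat set \<Rightarrow> nat set \<Rightarrow> real"
  assumes "\<not> \<phi>1 {}" "\<not> \<phi>2 {}"
    and p: "\<And>A B. A \<subseteq> {1..n} \<Longrightarrow> B \<subseteq> {1..n} \<Longrightarrow> p A B = q0 n A B *
              (\<Sum>A'\<in>subsets_of_card {1..n} (card A). \<Sum>B'\<in>subsets_of_card {1..n} (card B). p A' B')"
  shows "(\<Sum>A\<in>Pow {1..n}. \<Sum>B\<in>Pow {1..n}. of_bool (\<phi>1 A \<and> \<phi>2 B) * p A B)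
       = (\<Sum>k=1..n. \<Sum>l=1..n. joint_sig n \<phi>1 \<phi>2 k l *
            (\<Sum>A\<in>Pow {1..n}. \<Sum>B\<in>Pow {1..n}. of_bool (n - k < card A \<and> n - l < card B) * p A B))"
proof -
  have regroup: "(\<Sum>A\<in>Pow {1..n}. \<Sum>B\<in>Pow {1..n}. g A B) = (\<Sum>a=0..n. \<Sum>b=0..n.
      \<Sum>A\<in>subsets_of_card {1..n} a. \<Sum>B\<in>subsets_of_card {1..n} b. g A B)" for g :: "_ \<Rightarrow> _ \<Rightarrow> real"
    using sum_Pow_pairs_by_card[of "{1..n}" g] by simp
  define \<pi> where "\<pi> a b = (\<Sum>A\<in>subsets_of_card {1..n} a. \<Sum>B\<in>subsets_of_card {1..n} b. p A B)" for a b
  have "(\<Sum>A\<in>Pow {1..n}. \<Sum>B\<in>Pow {1..n}. of_bool (\<phi>1 A \<and> \<phi>2 B) * p A B)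
      = (\<Sum>a=0..n. \<Sum>b=0..n. \<pi> a b * Sbar n \<phi>1 \<phi>2 (n - a) (n - b))"
    unfolding regroup \<pi>_def using sum_subsets_of_card_structures_eq_Sbar[OF p]
    by (intro sum.cong refl) simp
  also have "\<dots> = (\<Sum>a=0..n. \<Sum>b=0..n. \<Sum>k=1..n. \<Sum>l=1..n.
                   joint_sig n \<phi>1 \<phi>2 k l * (of_bool (n - k < a) * of_bool (n - l < b) * \<pi> a b))"
    by (intro sum.cong refl) (simp add: Sbar_eq_sum_joint_sig assms(1,2) sum_distrib_left mult_ac)
  also have "\<dots> = (\<Sum>k=1..n. \<Sum>l=1..n. joint_sig n \<phi>1 \<phi>2 k l *
                   (\<Sum>a=0..n. \<Sum>b=0..n. of_bool (n - k < a) * of_bool (n - l < b) * \<pi> a b))"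
    by (simp only: sum_distrib_left sum.swap[of _ "{0..n}" "{1..n}"])
  also have "\<dots> = (\<Sum>k=1..n. \<Sum>l=1..n. joint_sig n \<phi>1 \<phi>2 k l *
            (\<Sum>A\<in>Pow {1..n}. \<Sum>B\<in>Pow {1..n}. of_bool (n - k < card A \<and> n - l < card B) * p A B))"
    unfolding regroup \<pi>_def sum_distrib_left by (intro sum.cong refl) auto
  finally show ?thesis .
qed

section \<open>State sets, system lifetimes and order statistics\<close>

lemma alive_subset: "alive n T t \<omega> \<subseteq> {1..n}"
  unfolding alive_def by auto

lemma alive_antimono: "t \<le> s \<Longrightarrow> alive n T s \<omega> \<subseteq> alive n T t \<omega>"
  unfolding alive_def by auto

lemma alive_right_locally_constant: "\<exists>s>t. alive n T s \<omega> = alive n T t \<omega>"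
proof -
  define m where "m = Min (insert (t + 1) ((\<lambda>j. T j \<omega>) ` alive n T t \<omega>))"
  have fin: "finite (alive n T t \<omega>)"
    using alive_subset finite_subset by (metis finite_atLeastAtMost)
  then have "t < m"
    unfolding m_def by (simp add: alive_def)
  moreover have "m \<le> T j \<omega>" if "j \<in> alive n T t \<omega>" for j
    unfolding m_def using Min_le[OF _ insertI2[OF imageI[OF that]]] fin by simp
  ultimately have "alive n T ((t + m) / 2) \<omega> = alive n T t \<omega>"
    unfolding alive_def by fastforce
  with \<open>t < m\<close> show ?thesis
    by (intro exI[of _ "(t + m) / 2"]) simp
qed

lemma less_sys_lifetime_iff:
  assumes "semicoherent n \<phi>"
  shows "t < sys_lifetime n \<phi> T \<omega> \<longleftrightarrow> \<phi> (alive n T t \<omega>)"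
proof -
  let ?X = "{s. \<phi> (alive n T s \<omega>)}"
  have mono: "\<phi> B" if "\<phi> A" "A \<subseteq> B" "B \<subseteq> {1..n}" for A B
    using assms that unfolding semicoherent_def by metis
  have "\<not> \<phi> {}" "\<phi> {1..n}"
    using assms unfolding semicoherent_def by simp_all
  define l where "l = Min ((\<lambda>j. T j \<omega>) ` {1..n}) - 1"
  have "l < T j \<omega>" if "j \<in> {1..n}" for j
    using Min_le[OF _ imageI[OF that], of "\<lambda>j. T j \<omega>"] unfolding l_def by simp
  then have "alive n T l \<omega> = {1..n}"
    unfolding alive_def by auto
  then have "?X \<noteq> {}"
    using \<open>\<phi> {1..n}\<close> by (metis empty_iff mem_Collect_eq)
  moreover have "bdd_above ?X"
  proof
    fix s assume "s \<in> ?X"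
    then obtain j where "j \<in> {1..n}" "s < T j \<omega>"
      using \<open>\<not> \<phi> {}\<close> unfolding alive_def by (metis (no_types, lifting) Collect_empty_eq mem_Collect_eq)
    moreover have "T j \<omega> \<le> Max ((\<lambda>j. T j \<omega>) ` {1..n})"
      using Max_ge[OF _ imageI[OF \<open>j \<in> {1..n}\<close>]] by simp
    ultimately show "s \<le> Max ((\<lambda>j. T j \<omega>) ` {1..n})"
      by linarith
  qed
  moreover have "\<phi> (alive n T t \<omega>)" if "s \<in> ?X" "t \<le> s" for s
    using mono[OF _ alive_antimono alive_subset] that by simp
  ultimately show ?thesis
    unfolding sys_lifetime_def less_cSup_iff[OF \<open>?X \<noteq> {}\<close> \<open>bdd_above ?X\<close>]
    using alive_right_locally_constant[of t n T \<omega>] by (metis le_less mem_Collect_eq)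
qed

lemma less_sorted_nth_iff:
  fixes ys :: "'a::linorder list"
  assumes "sorted ys" "k < length ys"
  shows "t < ys ! k \<longleftrightarrow> length ys - k \<le> length (filter (\<lambda>x. t < x) ys)"
proof -
  let ?I = "{i. i < length ys \<and> t < ys ! i}"
  have count: "length (filter (\<lambda>x. t < x) ys) = card ?I"
    by (rule length_filter_conv_card)
  show ?thesis
  proof
    assume "t < ys ! k"
    have "{k..<length ys} \<subseteq> ?I"
    proof
      fix i assume "i \<in> {k..<length ys}"
      then have "i < length ys" "ys ! k \<le> ys ! i"
        using sorted_nth_mono[OF assms(1)] by simp_all
      with \<open>t < ys ! k\<close> show "i \<in> ?I"
        by simp
    qed
    then have "card {k..<length ys} \<le> card ?I"
      by (intro card_mono) simp_all
    then show "length ys - k \<le> length (filter (\<lambda>x. t < x) ys)"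
      unfolding count by simp
  next
    assume le: "length ys - k \<le> length (filter (\<lambda>x. t < x) ys)"
    show "t < ys ! k"
    proof (rule ccontr)
      assume "\<not> t < ys ! k"
      have "?I \<subseteq> {Suc k..<length ys}"
      proof
        fix i assume "i \<in> ?I"
        moreover have "ys ! i \<le> ys ! k" if "i \<le> k"
          using sorted_nth_mono[OF assms(1) that assms(2)] .
        ultimately show "i \<in> {Suc k..<length ys}"
          using \<open>\<not> t < ys ! k\<close> by (auto simp: Suc_le_eq not_le[symmetric])
      qed
      then have "card ?I \<le> length ys - Suc k"
        using card_mono[of "{Suc k..<length ys}" ?I] by simp
      then show False
        using le assms(2) unfolding count by simp
    qed
  qed
qed

lemma less_order_stat_iff:
  assumes "1 \<le> k" "k \<le> n"
  shows "t < order_stat n k T \<omega> \<longleftrightarrow> n - k < card (alive n T t \<omega>)"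
proof -
  define xs where "xs = map (\<lambda>j. T j \<omega>) [1..<n+1]"
  have "length (filter (\<lambda>x. t < x) (sort xs)) = length (filter (\<lambda>x. t < x) xs)"
    by (metis mset_filter mset_sort size_mset)
  also have "\<dots> = length (filter (\<lambda>j. t < T j \<omega>) [1..<n+1])"
    unfolding xs_def by (simp add: filter_map comp_def)
  also have "\<dots> = card ({j. t < T j \<omega>} \<inter> {1..<n+1})"
    by (simp only: distinct_length_filter[OF distinct_upt] set_upt)
  also have "{j. t < T j \<omega>} \<inter> {1..<n+1} = alive n T t \<omega>"
    unfolding alive_def by auto
  finally have "length (filter (\<lambda>x. t < x) (sort xs)) = card (alive n T t \<omega>)" .
  moreover have "length (sort xs) = n"
    unfolding xs_def by simp
  ultimately show ?thesis
    using less_sorted_nth_iff[of "sort xs" "k - 1" t] assms unfolding order_stat_def xs_def[symmetric] by auto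
qed

lemma sets_alive_eq:
  assumes "\<And>j. j \<in> {1..n} \<Longrightarrow> T j \<in> borel_measurable M"
  shows "{\<omega> \<in> space M. alive n T t \<omega> = A} \<in> sets M"
proof -
  have "{\<omega> \<in> space M. alive n T t \<omega> = A}
      = {\<omega> \<in> space M. (\<forall>j\<in>{1..n}. t < T j \<omega> \<longleftrightarrow> j \<in> A) \<and> A \<subseteq> {1..n}}"
    unfolding alive_def by auto
  also have "\<dots> \<in> sets M"
    using assms by measurable
  finally show ?thesis .
qed

definition state_pair_prob ::
    "'a measure \<Rightarrow> nat \<Rightarrow> (nat \<Rightarrow> 'a \<Rightarrow> real) \<Rightarrow> real \<Rightarrow> real \<Rightarrow> nat set \<Rightarrow> nat set \<Rightarrow> real" where
  "state_pair_prob M n T t1 t2 A B =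
     measure M {\<omega> \<in> space M. alive n T t1 \<omega> = A \<and> alive n T t2 \<omega> = B}"

lemma measure_alive_pair_event:
  assumes "finite_measure M" "\<And>j. j \<in> {1..n} \<Longrightarrow> T j \<in> borel_measurable M"
  shows "measure M {\<omega> \<in> space M. Q (alive n T t1 \<omega>) (alive n T t2 \<omega>)}
       = (\<Sum>A\<in>Pow {1..n}. \<Sum>B\<in>Pow {1..n}. of_bool (Q A B) * state_pair_prob M n T t1 t2 A B)"
proof -
  interpret finite_measure M by (rule assms(1))
  define E where "E = (\<lambda>(A, B). {\<omega> \<in> space M. alive n T t1 \<omega> = A \<and> alive n T t2 \<omega> = B})"
  define I where "I = {i \<in> Pow {1..n} \<times> Pow {1..n}. case_prod Q i}"
  have "{\<omega> \<in> space M. Q (alive n T t1 \<omega>) (alive n T t2 \<omega>)} = (\<Union>i\<in>I. E i)"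
    unfolding E_def I_def using alive_subset by fastforce
  moreover have "E i \<in> sets M" for i
    unfolding E_def using sets_alive_eq[OF assms(2)] by (auto split: prod.split)
  moreover have "disjoint_family_on E I"
    unfolding E_def disjoint_family_on_def by auto
  moreover have "finite I"
    unfolding I_def by simp
  ultimately have "measure M {\<omega> \<in> space M. Q (alive n T t1 \<omega>) (alive n T t2 \<omega>)} = (\<Sum>i\<in>I. measure M (E i))"
    by (metis finite_measure_finite_Union image_subsetI)
  also have "\<dots> = (\<Sum>i\<in>Pow {1..n} \<times> Pow {1..n}. if case_prod Q i then measure M (E i) else 0)"
    unfolding I_def by (simp add: sum.inter_filter)
  also have "\<dots> = (\<Sum>(A, B)\<in>Pow {1..n} \<times> Pow {1..n}. of_bool (Q A B) * state_pair_prob M n T t1 t2 A B)"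
    unfolding E_def state_pair_prob_def by (intro sum.cong) auto
  finally show ?thesis
    by (simp only: sum.cartesian_product)
qed

lemma state_pair_prob_eq_q0:
  assumes inv: "\<And>A B \<sigma>. A \<subseteq> {1..n} \<Longrightarrow> B \<subseteq> {1..n} \<Longrightarrow> \<sigma> permutes {1..n} \<Longrightarrow>
                 state_pair_prob M n T t1 t2 (\<sigma> ` A) (\<sigma> ` B) = state_pair_prob M n T t1 t2 A B"
    and "A \<subseteq> {1..n}" "B \<subseteq> {1..n}"
  shows "state_pair_prob M n T t1 t2 A B = q0 n A B *
           (\<Sum>A'\<in>subsets_of_card {1..n} (card A). \<Sum>B'\<in>subsets_of_card {1..n} (card B).
              state_pair_prob M n T t1 t2 A' B')"
proof (cases "t1 \<le> t2")
  case True
  have "state_pair_prob M n T t1 t2 A B = 0" if "\<not> B \<subseteq> A" for A B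
  proof -
    have empty: "{\<omega> \<in> space M. alive n T t1 \<omega> = A \<and> alive n T t2 \<omega> = B} = {}"
      using alive_antimono[OF True, of n T] that by auto
    show ?thesis
      unfolding state_pair_prob_def empty by simp
  qed
  then show ?thesis
    using permutation_invariant_eq_q0[of "{1..n}"] inv assms(2,3) by simp
next
  case False
  have "state_pair_prob M n T t1 t2 A B = 0" if "\<not> A \<subseteq> B" for A B
  proof -
    have empty: "{\<omega> \<in> space M. alive n T t1 \<omega> = A \<and> alive n T t2 \<omega> = B} = {}"
      using alive_antimono[of t2 t1 n T] False that by auto
    show ?thesis
      unfolding state_pair_prob_def empty by simp
  qed
  then show ?thesis
    using permutation_invariant_eq_q0'[of "{1..n}"] inv assms(2,3) by simp
qed

lemma measure_sys_lifetimes_greater: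
  assumes "finite_measure M" "\<And>j. j \<in> {1..n} \<Longrightarrow> T j \<in> borel_measurable M"
    and "semicoherent n \<phi>1" "semicoherent n \<phi>2"
  shows "measure M {\<omega> \<in> space M. sys_lifetime n \<phi>1 T \<omega> > t1 \<and> sys_lifetime n \<phi>2 T \<omega> > t2}
       = (\<Sum>A\<in>Pow {1..n}. \<Sum>B\<in>Pow {1..n}. of_bool (\<phi>1 A \<and> \<phi>2 B) * state_pair_prob M n T t1 t2 A B)"
  using measure_alive_pair_event[OF assms(1,2), where Q = "\<lambda>A B. \<phi>1 A \<and> \<phi>2 B"] assms(3,4)
  by (simp add: less_sys_lifetime_iff)

lemma measure_order_stats_greater:
  assumes "finite_measure M" "\<And>j. j \<in> {1..n} \<Longrightarrow> T j \<in> borel_measurable M"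
    and "k \<in> {1..n}" "l \<in> {1..n}"
  shows "measure M {\<omega> \<in> space M. order_stat n k T \<omega> > t1 \<and> order_stat n l T \<omega> > t2}
       = (\<Sum>A\<in>Pow {1..n}. \<Sum>B\<in>Pow {1..n}.
            of_bool (n - k < card A \<and> n - l < card B) * state_pair_prob M n T t1 t2 A B)"
  using measure_alive_pair_event[OF assms(1,2), where Q = "\<lambda>A B. n - k < card A \<and> n - l < card B"]
    assms(3,4) by (simp add: less_order_stat_iff)

theorem proposition12:
  fixes M :: "'a measure" and n :: nat and T :: "nat \<Rightarrow> 'a \<Rightarrow> real"
    and \<phi>1 \<phi>2 :: "nat set \<Rightarrow> bool"
  assumes "prob_space M"
    and "n \<ge> 1"
    and meas: "\<And>j. j \<in> {1..n} \<Longrightarrow> T j \<in> borel_measurable M"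
    and nonneg: "\<And>j \<omega>. j \<in> {1..n} \<Longrightarrow> \<omega> \<in> space M \<Longrightarrow> T j \<omega> \<ge> 0"
    and no_ties: "\<And>i j. i \<in> {1..n} \<Longrightarrow> j \<in> {1..n} \<Longrightarrow> i \<noteq> j \<Longrightarrow>
                   measure M {\<omega> \<in> space M. T i \<omega> = T j \<omega>} = 0"
    and "semicoherent n \<phi>1" and "semicoherent n \<phi>2"
    and exch: "\<And>A B t1 t2 \<sigma>. A \<subseteq> {1..n} \<Longrightarrow> B \<subseteq> {1..n} \<Longrightarrow> t1 \<ge> 0 \<Longrightarrow> t2 \<ge> 0 \<Longrightarrow>
               \<sigma> permutes {1..n} \<Longrightarrow>
               measure M {\<omega> \<in> space M. alive n T t1 \<omega> = A \<and> alive n T t2 \<omega> = B}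
             = measure M {\<omega> \<in> space M. alive n T t1 \<omega> = \<sigma> ` A \<and> alive n T t2 \<omega> = \<sigma> ` B}"
    and "t1 \<ge> 0" and "t2 \<ge> 0"
  shows "measure M {\<omega> \<in> space M. sys_lifetime n \<phi>1 T \<omega> > t1 \<and> sys_lifetime n \<phi>2 T \<omega> > t2}
       = (\<Sum>k=1..n. \<Sum>l=1..n. joint_sig n \<phi>1 \<phi>2 k l *
            measure M {\<omega> \<in> space M. order_stat n k T \<omega> > t1 \<and> order_stat n l T \<omega> > t2})"
proof -
  have "finite_measure M"
    using \<open>prob_space M\<close> by (rule prob_space.finite_measure)
  have inv: "state_pair_prob M n T t1 t2 (\<sigma> ` A) (\<sigma> ` B) = state_pair_prob M n T t1 t2 A B"
    if "A \<subseteq> {1..n}" "B \<subseteq> {1..n}" "\<sigma> permutes {1..n}" for A B \<sigma>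
    using exch[OF that(1,2) \<open>t1 \<ge> 0\<close> \<open>t2 \<ge> 0\<close> that(3)] by (simp add: state_pair_prob_def)
  have "\<not> \<phi>1 {}" "\<not> \<phi>2 {}"
    using \<open>semicoherent n \<phi>1\<close> \<open>semicoherent n \<phi>2\<close> by (simp_all add: semicoherent_def)
  have "measure M {\<omega> \<in> space M. sys_lifetime n \<phi>1 T \<omega> > t1 \<and> sys_lifetime n \<phi>2 T \<omega> > t2}
      = (\<Sum>A\<in>Pow {1..n}. \<Sum>B\<in>Pow {1..n}. of_bool (\<phi>1 A \<and> \<phi>2 B) * state_pair_prob M n T t1 t2 A B)"
    using \<open>finite_measure M\<close> meas \<open>semicoherent n \<phi>1\<close> \<open>semicoherent n \<phi>2\<close>
    by (rule measure_sys_lifetimes_greater)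
  also have "\<dots> = (\<Sum>k=1..n. \<Sum>l=1..n. joint_sig n \<phi>1 \<phi>2 k l *
      (\<Sum>A\<in>Pow {1..n}. \<Sum>B\<in>Pow {1..n}.
         of_bool (n - k < card A \<and> n - l < card B) * state_pair_prob M n T t1 t2 A B))"
    using \<open>\<not> \<phi>1 {}\<close> \<open>\<not> \<phi>2 {}\<close> state_pair_prob_eq_q0[OF inv]
    by (rule joint_signature_expansion)
  also have "\<dots> = (\<Sum>k=1..n. \<Sum>l=1..n. joint_sig n \<phi>1 \<phi>2 k l *
      measure M {\<omega> \<in> space M. order_stat n k T \<omega> > t1 \<and> order_stat n l T \<omega> > t2})"
    using measure_order_stats_greater[OF \<open>finite_measure M\<close> meas] by (intro sum.cong refl) auto
  finally show ?thesis .
qed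

end
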